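(* Let $M$ be a Noetherian right $R$-module having the summand sum property. Then $M$ is principally Goldie*-lifting if and only if $M$ is Goldie*-lifting.
   Context: $R$ is an associative ring with identity; modules are unital right $R$-modules. $M$ has the summand sum property if the sum of any two direct summands of $M$ is a direct summand. $K\ll M$ means $K$ is small in $M$. For submodules $X,Y$ of $M$, $X\,\beta^*\,Y$ means $(X+Y)/X\ll M/X$ and $(X+Y)/Y\ll M/Y$. $M$ is Goldie*-lifting if for every submodule $X$ of $M$ there is a direct summand $D$ of $M$ with $X\,\beta^*\,D$; $M$ is principally Goldie*-lifting if this holds for every cyclic submodule $X$. *)

theory Defs
  imports Main
begin

text \<open>Right modules over a ring R (given by a type of class ring_1: associative
  ring with identity, not necessarily commutative), represented by an explicit
  carrier with operations, so that quotient modules can be formed.\<close>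

record ('r, 'm) rmod =
  carrier :: "'m set"
  madd :: "'m \<Rightarrow> 'm \<Rightarrow> 'm"
  mzero :: 'm
  smult :: "'m \<Rightarrow> 'r \<Rightarrow> 'm"

definition rmodule :: "('r::ring_1, 'm) rmod \<Rightarrow> bool" where
  "rmodule M \<longleftrightarrow>
     mzero M \<in> carrier M \<and>
     (\<forall>x\<in>carrier M. \<forall>y\<in>carrier M. madd M x y \<in> carrier M) \<and>
     (\<forall>x\<in>carrier M. \<forall>y\<in>carrier M. \<forall>z\<in>carrier M.
        madd M (madd M x y) z = madd M x (madd M y z)) \<and>
     (\<forall>x\<in>carrier M. \<forall>y\<in>carrier M. madd M x y = madd M y x) \<and>
     (\<forall>x\<in>carrier M. madd M (mzero M) x = x) \<and>
     (\<forall>x\<in>carrier M. \<exists>y\<in>carrier M. madd M x y = mzero M) \<and>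
     (\<forall>x\<in>carrier M. \<forall>r. smult M x r \<in> carrier M) \<and>
     (\<forall>x\<in>carrier M. \<forall>y\<in>carrier M. \<forall>r.
        smult M (madd M x y) r = madd M (smult M x r) (smult M y r)) \<and>
     (\<forall>x\<in>carrier M. \<forall>r s.
        smult M x (r + s) = madd M (smult M x r) (smult M x s)) \<and>
     (\<forall>x\<in>carrier M. \<forall>r s. smult M (smult M x r) s = smult M x (r * s)) \<and>
     (\<forall>x\<in>carrier M. smult M x 1 = x)"

definition submodule :: "'m set \<Rightarrow> ('r::ring_1, 'm) rmod \<Rightarrow> bool" where
  "submodule N M \<longleftrightarrow> N \<subseteq> carrier M \<and> mzero M \<in> N \<and>
     (\<forall>x\<in>N. \<forall>y\<in>N. madd M x y \<in> N) \<and> (\<forall>x\<in>N. \<forall>r. smult M x r \<in> N)"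

definition msum :: "('r, 'm) rmod \<Rightarrow> 'm set \<Rightarrow> 'm set \<Rightarrow> 'm set" where
  "msum M X Y = {madd M x y | x y. x \<in> X \<and> y \<in> Y}"

definition small :: "'m set \<Rightarrow> ('r::ring_1, 'm) rmod \<Rightarrow> bool" where
  "small K M \<longleftrightarrow> submodule K M \<and>
     (\<forall>L. submodule L M \<and> msum M K L = carrier M \<longrightarrow> L = carrier M)"

definition direct_summand :: "'m set \<Rightarrow> ('r::ring_1, 'm) rmod \<Rightarrow> bool" where
  "direct_summand D M \<longleftrightarrow> submodule D M \<and>
     (\<exists>D'. submodule D' M \<and> msum M D D' = carrier M \<and> D \<inter> D' = {mzero M})"

definition mcoset :: "('r, 'm) rmod \<Rightarrow> 'm \<Rightarrow> 'm set \<Rightarrow> 'm set" where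
  "mcoset M x X = {madd M x y | y. y \<in> X}"

definition quotient_mod :: "('r, 'm) rmod \<Rightarrow> 'm set \<Rightarrow> ('r, 'm set) rmod" where
  "quotient_mod M X =
     \<lparr> carrier = {mcoset M x X | x. x \<in> carrier M},
       madd = (\<lambda>A B. mcoset M (madd M (SOME a. a \<in> A) (SOME b. b \<in> B)) X),
       mzero = X,
       smult = (\<lambda>A r. mcoset M (smult M (SOME a. a \<in> A) r) X) \<rparr>"

definition quotient_sub :: "('r, 'm) rmod \<Rightarrow> 'm set \<Rightarrow> 'm set \<Rightarrow> 'm set set" where
  "quotient_sub M N X = {mcoset M x X | x. x \<in> N}"

definition beta_star :: "('r::ring_1, 'm) rmod \<Rightarrow> 'm set \<Rightarrow> 'm set \<Rightarrow> bool" where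
  "beta_star M X Y \<longleftrightarrow>
     small (quotient_sub M (msum M X Y) X) (quotient_mod M X) \<and>
     small (quotient_sub M (msum M X Y) Y) (quotient_mod M Y)"

definition noetherian :: "('r::ring_1, 'm) rmod \<Rightarrow> bool" where
  "noetherian M \<longleftrightarrow> (\<forall>f :: nat \<Rightarrow> 'm set.
     (\<forall>n. submodule (f n) M) \<and> (\<forall>n. f n \<subseteq> f (Suc n)) \<longrightarrow>
     (\<exists>N. \<forall>n\<ge>N. f n = f N))"

definition summand_sum_property :: "('r::ring_1, 'm) rmod \<Rightarrow> bool" where
  "summand_sum_property M \<longleftrightarrow> (\<forall>D1 D2. direct_summand D1 M \<and> direct_summand D2 M
     \<longrightarrow> direct_summand (msum M D1 D2) M)"

definition cyclic_sub :: "('r::ring_1, 'm) rmod \<Rightarrow> 'm \<Rightarrow> 'm set" where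
  "cyclic_sub M m = {smult M m r | r. True}"

definition goldie_star_lifting :: "('r::ring_1, 'm) rmod \<Rightarrow> bool" where
  "goldie_star_lifting M \<longleftrightarrow> (\<forall>X. submodule X M \<longrightarrow>
     (\<exists>D. direct_summand D M \<and> beta_star M X D))"

definition principally_goldie_star_lifting :: "('r::ring_1, 'm) rmod \<Rightarrow> bool" where
  "principally_goldie_star_lifting M \<longleftrightarrow> (\<forall>m\<in>carrier M.
     \<exists>D. direct_summand D M \<and> beta_star M (cyclic_sub M m) D)"

end

theory Submission
  imports Defs
begin

(* 1. Elementary module arithmetic, sums of submodules and cosets.
   2. Smallness in quotients: for submodules X \<subseteq> N of M, N/X \<ll> M/X holds iff
      X is "cosmall" in N, i.e. N + K = M implies X + K = M for every submodule K.  Consequently X \<beta>* Y iff X and Y are both cosmall in X + Y.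
   3. The relation \<beta>* is compatible with sums: X1 \<beta>* Y1 and X2 \<beta>* Y2 imply
      (X1 + X2) \<beta>* (Y1 + Y2).
   4. Noetherian induction: a property of submodules of X that holds for 0 and
      survives adding a cyclic submodule mR (m \<in> X) holds for X itself.
   The theorem follows: "X has a \<beta>*-partner which is a direct summand" holds for 0,
   and is preserved by adding mR thanks to 3 and the summand sum property. *)

locale right_module =
  fixes M :: "('r::ring_1, 'm) rmod"
  assumes rmod: "rmodule M"
begin

lemma zero_closed [simp]: "mzero M \<in> carrier M"
  using rmod unfolding rmodule_def by blast

lemma add_closed [simp]: "x \<in> carrier M \<Longrightarrow> y \<in> carrier M \<Longrightarrow> madd M x y \<in> carrier M"
proof -
  have "\<forall>x\<in>carrier M. \<forall>y\<in>carrier M. madd M x y \<in> carrier M"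
    using rmod unfolding rmodule_def by (elim conjE)
  then show "x \<in> carrier M \<Longrightarrow> y \<in> carrier M \<Longrightarrow> madd M x y \<in> carrier M" by blast
qed

lemma add_assoc:
  "x \<in> carrier M \<Longrightarrow> y \<in> carrier M \<Longrightarrow> z \<in> carrier M \<Longrightarrow>
   madd M (madd M x y) z = madd M x (madd M y z)"
  using rmod unfolding rmodule_def by blast

lemma add_comm: "x \<in> carrier M \<Longrightarrow> y \<in> carrier M \<Longrightarrow> madd M x y = madd M y x"
  using rmod unfolding rmodule_def by blast

lemma add_lcomm:
  "x \<in> carrier M \<Longrightarrow> y \<in> carrier M \<Longrightarrow> z \<in> carrier M \<Longrightarrow>
   madd M x (madd M y z) = madd M y (madd M x z)"
  by (metis add_assoc add_comm)

lemma lzero [simp]: "x \<in> carrier M \<Longrightarrow> madd M (mzero M) x = x"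
  using rmod unfolding rmodule_def by blast

lemma rzero [simp]: "x \<in> carrier M \<Longrightarrow> madd M x (mzero M) = x"
  using lzero add_comm by simp

lemma neg_exists: "x \<in> carrier M \<Longrightarrow> \<exists>y\<in>carrier M. madd M x y = mzero M"
  using rmod unfolding rmodule_def by blast

lemma smult_closed [simp]: "x \<in> carrier M \<Longrightarrow> smult M x r \<in> carrier M"
  using rmod unfolding rmodule_def by blast

lemma smult_add_left:
  "x \<in> carrier M \<Longrightarrow> y \<in> carrier M \<Longrightarrow>
   smult M (madd M x y) r = madd M (smult M x r) (smult M y r)"
  using rmod unfolding rmodule_def by blast

lemma smult_add_right:
  "x \<in> carrier M \<Longrightarrow> smult M x (r + s) = madd M (smult M x r) (smult M x s)"
  using rmod unfolding rmodule_def by blast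

lemma smult_assoc: "x \<in> carrier M \<Longrightarrow> smult M (smult M x r) s = smult M x (r * s)"
  using rmod unfolding rmodule_def by blast

lemma smult_one [simp]: "x \<in> carrier M \<Longrightarrow> smult M x 1 = x"
  using rmod unfolding rmodule_def by blast

lemma add_left_cancel:
  assumes "x \<in> carrier M" "y \<in> carrier M" "z \<in> carrier M"
    and "madd M x y = madd M x z"
  shows "y = z"
proof -
  obtain n where n: "n \<in> carrier M" "madd M x n = mzero M"
    using neg_exists assms(1) by blast
  have "madd M n (madd M x y) = madd M n (madd M x z)"
    using assms(4) by simp
  then show ?thesis
    using assms(1-3) n by (metis add_assoc add_comm lzero)
qed

lemma smult_zero [simp]: "x \<in> carrier M \<Longrightarrow> smult M x 0 = mzero M"
  using smult_add_right[of x 1 0] add_left_cancel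
  by (metis add_0_right rzero smult_closed zero_closed)

lemma add_smult_minus_one: "x \<in> carrier M \<Longrightarrow> madd M x (smult M x (-1)) = mzero M"
  using smult_add_right[of x 1 "-1"] by simp

lemma sub_carrier: "submodule N M \<Longrightarrow> N \<subseteq> carrier M"
  unfolding submodule_def by blast

lemma sub_zero: "submodule N M \<Longrightarrow> mzero M \<in> N"
  unfolding submodule_def by blast

lemma sub_add: "submodule N M \<Longrightarrow> x \<in> N \<Longrightarrow> y \<in> N \<Longrightarrow> madd M x y \<in> N"
  unfolding submodule_def by blast

lemma sub_smult: "submodule N M \<Longrightarrow> x \<in> N \<Longrightarrow> smult M x r \<in> N"
  unfolding submodule_def by blast

lemma zero_submodule: "submodule {mzero M} M"
  unfolding submodule_def by (simp, metis smult_assoc smult_zero zero_closed mult_zero_left)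

lemma cyclic_submodule: "m \<in> carrier M \<Longrightarrow> submodule (cyclic_sub M m) M"
  unfolding submodule_def cyclic_sub_def
proof (intro conjI ballI allI)
  assume m: "m \<in> carrier M"
  show "{smult M m r |r. True} \<subseteq> carrier M" using m by auto
  show "mzero M \<in> {smult M m r |r. True}" using m smult_zero[OF m] by (metis (mono_tags, lifting) mem_Collect_eq)
  fix x y assume "x \<in> {smult M m r |r. True}" "y \<in> {smult M m r |r. True}"
  then obtain r s where "x = smult M m r" "y = smult M m s" by blast
  then show "madd M x y \<in> {smult M m r |r. True}"
    using smult_add_right[OF m, of r s] by (auto intro!: exI[where x = "r + s"])
next
  fix x r assume m: "m \<in> carrier M" and "x \<in> {smult M m r |r. True}"
  then obtain s where "x = smult M m s" by blast
  then show "smult M x r \<in> {smult M m r |r. True}" using smult_assoc[OF m] by auto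
qed

lemma cyclic_mem: "m \<in> carrier M \<Longrightarrow> m \<in> cyclic_sub M m"
  unfolding cyclic_sub_def by (metis (mono_tags) mem_Collect_eq smult_one)

lemma cyclic_least: "submodule X M \<Longrightarrow> m \<in> X \<Longrightarrow> cyclic_sub M m \<subseteq> X"
  unfolding cyclic_sub_def using sub_smult by blast

lemma msum_carrier: "X \<subseteq> carrier M \<Longrightarrow> Y \<subseteq> carrier M \<Longrightarrow> msum M X Y \<subseteq> carrier M"
  unfolding msum_def by (auto intro!: add_closed)

lemma msum_comm: "X \<subseteq> carrier M \<Longrightarrow> Y \<subseteq> carrier M \<Longrightarrow> msum M X Y = msum M Y X"
  unfolding msum_def by (auto, (metis add_comm subsetD)+)

lemma msum_assoc:
  assumes "X \<subseteq> carrier M" "Y \<subseteq> carrier M" "Z \<subseteq> carrier M"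
  shows "msum M (msum M X Y) Z = msum M X (msum M Y Z)"
  unfolding msum_def using assms add_assoc by (auto 0 4 simp: subset_iff) metis+

lemma msum_lcomm:
  "X \<subseteq> carrier M \<Longrightarrow> Y \<subseteq> carrier M \<Longrightarrow> Z \<subseteq> carrier M \<Longrightarrow>
   msum M X (msum M Y Z) = msum M Y (msum M X Z)"
  by (metis msum_assoc msum_comm)

lemma msum_submodule:
  assumes X: "submodule X M" and Y: "submodule Y M"
  shows "submodule (msum M X Y) M"
  unfolding submodule_def
proof (intro conjI ballI allI)
  note c = sub_carrier[OF X] sub_carrier[OF Y]
  show "msum M X Y \<subseteq> carrier M" using msum_carrier c by blast
  show "mzero M \<in> msum M X Y" unfolding msum_def using sub_zero X Y by force
  fix a b assume "a \<in> msum M X Y" "b \<in> msum M X Y"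
  then obtain x1 y1 x2 y2 where e: "a = madd M x1 y1" "b = madd M x2 y2"
    "x1 \<in> X" "x2 \<in> X" "y1 \<in> Y" "y2 \<in> Y"
    unfolding msum_def by blast
  have "madd M a b = madd M (madd M x1 x2) (madd M y1 y2)"
    using c e by (simp add: subset_iff add_assoc add_lcomm)
  then show "madd M a b \<in> msum M X Y" unfolding msum_def using e sub_add X Y by blast
next
  fix a r assume "a \<in> msum M X Y"
  then obtain x y where e: "a = madd M x y" "x \<in> X" "y \<in> Y"
    unfolding msum_def by blast
  then have "smult M a r = madd M (smult M x r) (smult M y r)"
    using sub_carrier X Y smult_add_left by blast
  then show "smult M a r \<in> msum M X Y" unfolding msum_def using e sub_smult X Y by blast
qed

lemma msum_upper1: "submodule Y M \<Longrightarrow> X \<subseteq> carrier M \<Longrightarrow> X \<subseteq> msum M X Y"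
  unfolding msum_def using sub_zero rzero by (force simp: subset_iff)

lemma msum_upper2: "submodule X M \<Longrightarrow> Y \<subseteq> carrier M \<Longrightarrow> Y \<subseteq> msum M X Y"
  by (metis msum_comm msum_upper1 sub_carrier)

lemma msum_least: "submodule Z M \<Longrightarrow> X \<subseteq> Z \<Longrightarrow> Y \<subseteq> Z \<Longrightarrow> msum M X Y \<subseteq> Z"
  unfolding msum_def using sub_add by blast

lemma msum_absorb: "submodule X M \<Longrightarrow> submodule K M \<Longrightarrow> X \<subseteq> K \<Longrightarrow> msum M X K = K"
  by (meson msum_least msum_upper2 order_refl sub_carrier subset_antisym)

lemma coset_mem: "submodule X M \<Longrightarrow> x \<in> carrier M \<Longrightarrow> x \<in> mcoset M x X"
  unfolding mcoset_def using sub_zero rzero by (metis (mono_tags) mem_Collect_eq)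

lemma coset_intro: "u \<in> X \<Longrightarrow> madd M x u \<in> mcoset M x X"
  unfolding mcoset_def by blast

lemma coset_elim: "a \<in> mcoset M x X \<Longrightarrow> \<exists>u\<in>X. a = madd M x u"
  unfolding mcoset_def by blast

lemma coset_eq:
  assumes X: "submodule X M" and x: "x \<in> carrier M" and a: "a \<in> mcoset M x X"
  shows "mcoset M a X = mcoset M x X"
proof -
  obtain u where u: "u \<in> X" "a = madd M x u" using coset_elim[OF a] by blast
  have uc: "u \<in> carrier M" using u X sub_carrier by blast
  show ?thesis
  proof
    show "mcoset M a X \<subseteq> mcoset M x X"
    proof
      fix b assume "b \<in> mcoset M a X"
      then obtain v where v: "v \<in> X" "b = madd M a v" using coset_elim by blast
      have "b = madd M x (madd M u v)"
        using u v uc x X sub_carrier add_assoc by blast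
      then show "b \<in> mcoset M x X" using coset_intro sub_add[OF X u(1) v(1)] by metis
    qed
  next
    show "mcoset M x X \<subseteq> mcoset M a X"
    proof
      fix b assume "b \<in> mcoset M x X"
      then obtain w where w: "w \<in> X" "b = madd M x w" using coset_elim by blast
      define n where "n = smult M u (-1)"
      have n: "n \<in> X" "n \<in> carrier M" using sub_smult X u uc n_def by auto
      have wc: "w \<in> carrier M" using w X sub_carrier by blast
      have "madd M a (madd M n w) = madd M x (madd M (madd M u n) w)"
        using u uc n wc x add_assoc by simp
      also have "\<dots> = b" using add_smult_minus_one[OF uc] n_def w wc by simp
      finally show "b \<in> mcoset M a X" using coset_intro sub_add[OF X n(1) w(1)] by metis
    qed
  qed
qed

lemma coset_eqD:
  assumes "submodule X M" "x \<in> carrier M" "mcoset M x X = mcoset M y X"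
  shows "\<exists>u\<in>X. x = madd M y u"
  using coset_mem[OF assms(1,2)] assms(3) coset_elim by metis

lemma coset_of_member: assumes X: "submodule X M" and x: "x \<in> X" shows "mcoset M x X = X"
proof -
  have "mcoset M (mzero M) X = X"
    using X sub_carrier unfolding mcoset_def by (force simp: subset_iff)
  moreover have "x \<in> mcoset M (mzero M) X"
    using x X sub_carrier by (metis coset_intro lzero subsetD)
  ultimately show ?thesis using coset_eq[OF X zero_closed] by simp
qed

lemma quotient_carrier: "carrier (quotient_mod M X) = {mcoset M x X |x. x \<in> carrier M}"
  unfolding quotient_mod_def by simp

lemma quotient_zero: "mzero (quotient_mod M X) = X"
  unfolding quotient_mod_def by simp

lemma quotient_add:
  assumes X: "submodule X M" and x: "x \<in> carrier M" and y: "y \<in> carrier M"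
  shows "madd (quotient_mod M X) (mcoset M x X) (mcoset M y X) = mcoset M (madd M x y) X"
proof -
  define a where "a = (SOME a. a \<in> mcoset M x X)"
  define b where "b = (SOME b. b \<in> mcoset M y X)"
  have "a \<in> mcoset M x X" unfolding a_def using coset_mem[OF X x] by (rule someI)
  then obtain u where u: "u \<in> X" "a = madd M x u" using coset_elim by blast
  have "b \<in> mcoset M y X" unfolding b_def using coset_mem[OF X y] by (rule someI)
  then obtain v where v: "v \<in> X" "b = madd M y v" using coset_elim by blast
  have uv: "u \<in> carrier M" "v \<in> carrier M" using u v X sub_carrier by blast+
  have "madd M a b = madd M (madd M x y) (madd M u v)"
    using u v uv x y by (simp add: add_assoc add_lcomm)
  then have "madd M a b \<in> mcoset M (madd M x y) X"
    using coset_intro sub_add[OF X u(1) v(1)] by metis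
  then have "mcoset M (madd M a b) X = mcoset M (madd M x y) X"
    using coset_eq[OF X add_closed[OF x y]] by blast
  then show ?thesis unfolding quotient_mod_def a_def b_def by simp
qed

lemma quotient_smult:
  assumes X: "submodule X M" and x: "x \<in> carrier M"
  shows "smult (quotient_mod M X) (mcoset M x X) r = mcoset M (smult M x r) X"
proof -
  define a where "a = (SOME a. a \<in> mcoset M x X)"
  have "a \<in> mcoset M x X" unfolding a_def using coset_mem[OF X x] by (rule someI)
  then obtain u where u: "u \<in> X" "a = madd M x u" using coset_elim by blast
  have "smult M a r = madd M (smult M x r) (smult M u r)"
    using u X sub_carrier x smult_add_left by blast
  then have "smult M a r \<in> mcoset M (smult M x r) X"
    using coset_intro sub_smult[OF X u(1)] by metis
  then have "mcoset M (smult M a r) X = mcoset M (smult M x r) X"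
    using coset_eq[OF X smult_closed[OF x]] by blast
  then show ?thesis unfolding quotient_mod_def a_def by simp
qed

subsection \<open>Transporting submodules between M and M/X\<close>

lemma quotient_sub_submodule:
  assumes X: "submodule X M" and N: "submodule N M"
  shows "submodule (quotient_sub M N X) (quotient_mod M X)"
  unfolding submodule_def
proof (intro conjI ballI allI)
  have Nc: "N \<subseteq> carrier M" using N sub_carrier by blast
  show "quotient_sub M N X \<subseteq> carrier (quotient_mod M X)"
    unfolding quotient_sub_def quotient_carrier using Nc by blast
  show "mzero (quotient_mod M X) \<in> quotient_sub M N X"
    unfolding quotient_sub_def quotient_zero
    using coset_of_member[OF X sub_zero[OF X]] sub_zero[OF N] by force
  fix A B assume "A \<in> quotient_sub M N X" "B \<in> quotient_sub M N X"
  then obtain a b where ab: "a \<in> N" "b \<in> N" "A = mcoset M a X" "B = mcoset M b X"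
    unfolding quotient_sub_def by blast
  then have "madd (quotient_mod M X) A B = mcoset M (madd M a b) X"
    using quotient_add[OF X] Nc by blast
  then show "madd (quotient_mod M X) A B \<in> quotient_sub M N X"
    unfolding quotient_sub_def using sub_add[OF N ab(1,2)] by blast
next
  fix A r assume "A \<in> quotient_sub M N X"
  then obtain a where a: "a \<in> N" "A = mcoset M a X"
    unfolding quotient_sub_def by blast
  then have "smult (quotient_mod M X) A r = mcoset M (smult M a r) X"
    using quotient_smult[OF X] N sub_carrier by blast
  then show "smult (quotient_mod M X) A r \<in> quotient_sub M N X"
    unfolding quotient_sub_def using sub_smult[OF N a(1)] by blast
qed

lemma quotient_sub_msum:
  assumes X: "submodule X M" and A: "submodule A M" and B: "submodule B M"
  shows "quotient_sub M (msum M A B) X =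
    msum (quotient_mod M X) (quotient_sub M A X) (quotient_sub M B X)"
proof -
  have "mcoset M (madd M a b) X =
      madd (quotient_mod M X) (mcoset M a X) (mcoset M b X)" if "a \<in> A" "b \<in> B" for a b
    using quotient_add[OF X] that A B sub_carrier by blast
  then show ?thesis
    unfolding quotient_sub_def msum_def by blast
qed

lemma quotient_sub_carrier: "quotient_sub M (carrier M) X = carrier (quotient_mod M X)"
  unfolding quotient_sub_def quotient_carrier ..

lemma quotient_sub_full:
  assumes X: "submodule X M" and N: "submodule N M" and XN: "X \<subseteq> N"
    and full: "quotient_sub M N X = carrier (quotient_mod M X)"
  shows "N = carrier M"
proof
  show "N \<subseteq> carrier M" using N sub_carrier by blast
  show "carrier M \<subseteq> N"
  proof
    fix m assume m: "m \<in> carrier M"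
    then have "mcoset M m X \<in> quotient_sub M N X"
      using full unfolding quotient_carrier by blast
    then obtain a where a: "a \<in> N" "mcoset M m X = mcoset M a X"
      unfolding quotient_sub_def by blast
    then obtain u where "u \<in> X" "m = madd M a u" using coset_eqD[OF X m] by blast
    then show "m \<in> N" using sub_add[OF N] a(1) XN by blast
  qed
qed

definition coset_preimage :: "'m set \<Rightarrow> 'm set set \<Rightarrow> 'm set" where
  "coset_preimage X L = {m \<in> carrier M. mcoset M m X \<in> L}"

lemma coset_preimage_submodule:
  assumes X: "submodule X M" and L: "submodule L (quotient_mod M X)"
  shows "submodule (coset_preimage X L) M"
proof -
  have L_add: "madd (quotient_mod M X) A B \<in> L" if "A \<in> L" "B \<in> L" for A B
    using L that unfolding submodule_def by blast
  have L_smult: "smult (quotient_mod M X) A r \<in> L" if "A \<in> L" for A r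
    using L that unfolding submodule_def by blast
  have "mcoset M (mzero M) X \<in> L"
    using coset_of_member[OF X sub_zero[OF X]] L
    unfolding submodule_def quotient_zero by simp
  moreover have "mcoset M (madd M a b) X \<in> L"
    if "a \<in> carrier M" "b \<in> carrier M" "mcoset M a X \<in> L" "mcoset M b X \<in> L" for a b
    using L_add[OF that(3,4)] quotient_add[OF X that(1,2)] by simp
  moreover have "mcoset M (smult M a r) X \<in> L"
    if "a \<in> carrier M" "mcoset M a X \<in> L" for a r
    using L_smult[OF that(2)] quotient_smult[OF X that(1)] by simp
  ultimately show ?thesis
    unfolding submodule_def coset_preimage_def by auto
qed

lemma coset_preimage_contains:
  assumes X: "submodule X M" and L: "submodule L (quotient_mod M X)"
  shows "X \<subseteq> coset_preimage X L"
  using coset_of_member[OF X] L sub_carrier[OF X]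
  unfolding coset_preimage_def submodule_def quotient_zero by auto

lemma quotient_sub_preimage:
  assumes "L \<subseteq> carrier (quotient_mod M X)"
  shows "quotient_sub M (coset_preimage X L) X = L"
  using assms unfolding quotient_sub_def coset_preimage_def quotient_carrier by blast

subsection \<open>Smallness in quotients and the relation \<beta>*\<close>

definition cosmall :: "'m set \<Rightarrow> 'm set \<Rightarrow> bool" where
  "cosmall X N \<longleftrightarrow>
     (\<forall>K. submodule K M \<and> msum M N K = carrier M \<longrightarrow> msum M X K = carrier M)"

lemma small_quotient_iff_cosmall:
  assumes X: "submodule X M" and N: "submodule N M" and XN: "X \<subseteq> N"
  shows "small (quotient_sub M N X) (quotient_mod M X) \<longleftrightarrow> cosmall X N"
proof
  assume small: "small (quotient_sub M N X) (quotient_mod M X)"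
  show "cosmall X N" unfolding cosmall_def
  proof (intro allI impI, elim conjE)
    fix K assume K: "submodule K M" and NK: "msum M N K = carrier M"
    have c: "X \<subseteq> carrier M" "N \<subseteq> carrier M" "K \<subseteq> carrier M"
      using X N K sub_carrier by blast+
    have XK: "submodule (msum M X K) M" using msum_submodule[OF X K] .
    have "msum M N (msum M X K) = msum M (msum M X N) K"
      using msum_assoc[OF c] msum_lcomm[of N X K] c by simp
    also have "\<dots> = msum M N K"
      using msum_absorb[OF X N XN] by simp
    finally have "msum M N (msum M X K) = carrier M" using NK by simp
    \<comment> \<open>Hence N/X + (X + K)/X = M/X, and smallness of N/X forces (X + K)/X = M/X.\<close>
    then have "msum (quotient_mod M X) (quotient_sub M N X) (quotient_sub M (msum M X K) X)
        = carrier (quotient_mod M X)"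
      using quotient_sub_msum[OF X N XK] quotient_sub_carrier by simp
    then have "quotient_sub M (msum M X K) X = carrier (quotient_mod M X)"
      using small quotient_sub_submodule[OF X XK] unfolding small_def by blast
    moreover have "X \<subseteq> msum M X K" using msum_upper1[OF K c(1)] .
    ultimately show "msum M X K = carrier M"
      using quotient_sub_full[OF X XK] by blast
  qed
next
  assume cs: "cosmall X N"
  show "small (quotient_sub M N X) (quotient_mod M X)" unfolding small_def
  proof (intro conjI allI impI)
    show "submodule (quotient_sub M N X) (quotient_mod M X)"
      using quotient_sub_submodule[OF X N] .
  next
    fix L assume "submodule L (quotient_mod M X) \<and>
      msum (quotient_mod M X) (quotient_sub M N X) L = carrier (quotient_mod M X)"
    then have L: "submodule L (quotient_mod M X)"
      and NL: "msum (quotient_mod M X) (quotient_sub M N X) L = carrier (quotient_mod M X)"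
      by blast+
    \<comment> \<open>Pull L back to the submodule K = {m. m + X \<in> L} of M, which contains X.\<close>
    define K where "K = coset_preimage X L"
    have K: "submodule K M" and XK: "X \<subseteq> K"
      unfolding K_def using coset_preimage_submodule[OF X L] coset_preimage_contains[OF X L] .
    have KL: "quotient_sub M K X = L"
      unfolding K_def using quotient_sub_preimage L unfolding submodule_def by blast
    have NK: "submodule (msum M N K) M" using msum_submodule[OF N K] .
    have "quotient_sub M (msum M N K) X = carrier (quotient_mod M X)"
      using quotient_sub_msum[OF X N K] KL NL by simp
    moreover have "X \<subseteq> msum M N K"
      using XN msum_upper1[OF K] sub_carrier[OF N] by blast
    ultimately have "msum M N K = carrier M"
      using quotient_sub_full[OF X NK] by blast
    then have "msum M X K = carrier M"
      using cs K unfolding cosmall_def by blast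
    then have "K = carrier M"
      using msum_absorb[OF X K XK] by simp
    then show "L = carrier (quotient_mod M X)" using KL quotient_sub_carrier by simp
  qed
qed

lemma beta_star_iff_cosmall:
  assumes X: "submodule X M" and Y: "submodule Y M"
  shows "beta_star M X Y \<longleftrightarrow> cosmall X (msum M X Y) \<and> cosmall Y (msum M X Y)"
proof -
  have XY: "submodule (msum M X Y) M" using msum_submodule[OF X Y] .
  have "X \<subseteq> msum M X Y" using msum_upper1[OF Y sub_carrier[OF X]] .
  moreover have "Y \<subseteq> msum M X Y" using msum_upper2[OF X sub_carrier[OF Y]] .
  ultimately show ?thesis
    unfolding beta_star_def
    using small_quotient_iff_cosmall[OF X XY] small_quotient_iff_cosmall[OF Y XY] by (simp only:)
qed

lemma cosmall_msum:
  assumes A1: "submodule A1 M" and B1: "submodule B1 M"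
    and A2: "submodule A2 M" and B2: "submodule B2 M"
    and c1: "cosmall A1 (msum M A1 B1)" and c2: "cosmall A2 (msum M A2 B2)"
  shows "cosmall (msum M A1 A2) (msum M (msum M A1 A2) (msum M B1 B2))"
  unfolding cosmall_def
proof (intro allI impI, elim conjE)
  fix K assume K: "submodule K M"
    and full: "msum M (msum M (msum M A1 A2) (msum M B1 B2)) K = carrier M"
  have [simp]: "A1 \<subseteq> carrier M" "A2 \<subseteq> carrier M" "B1 \<subseteq> carrier M" "B2 \<subseteq> carrier M"
    "K \<subseteq> carrier M"
    using A1 A2 B1 B2 K sub_carrier by blast+
  note msum_ac = msum_assoc msum_carrier msum_comm msum_lcomm
  \<comment> \<open>First absorb B1, using A2 + B2 + K as the complement.\<close>
  have "msum M (msum M A1 B1) (msum M (msum M A2 B2) K) = carrier M"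
    using full by (simp add: msum_ac)
  then have "msum M A1 (msum M (msum M A2 B2) K) = carrier M"
    using c1 msum_submodule[OF msum_submodule[OF A2 B2] K] unfolding cosmall_def by blast
  \<comment> \<open>Then absorb B2, using A1 + K as the complement.\<close>
  then have "msum M (msum M A2 B2) (msum M A1 K) = carrier M"
    by (simp add: msum_ac)
  then have "msum M A2 (msum M A1 K) = carrier M"
    using c2 msum_submodule[OF A1 K] unfolding cosmall_def by blast
  then show "msum M (msum M A1 A2) K = carrier M"
    by (simp add: msum_ac)
qed

lemma beta_star_msum:
  assumes X1: "submodule X1 M" and Y1: "submodule Y1 M"
    and X2: "submodule X2 M" and Y2: "submodule Y2 M"
    and b1: "beta_star M X1 Y1" and b2: "beta_star M X2 Y2"
  shows "beta_star M (msum M X1 X2) (msum M Y1 Y2)"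
proof -
  have comm1: "msum M Y1 X1 = msum M X1 Y1" and comm2: "msum M Y2 X2 = msum M X2 Y2"
    using msum_comm X1 X2 Y1 Y2 sub_carrier by metis+
  have c1: "cosmall X1 (msum M X1 Y1)" "cosmall Y1 (msum M Y1 X1)"
    using b1 unfolding beta_star_iff_cosmall[OF X1 Y1] comm1 by blast+
  have c2: "cosmall X2 (msum M X2 Y2)" "cosmall Y2 (msum M Y2 X2)"
    using b2 unfolding beta_star_iff_cosmall[OF X2 Y2] comm2 by blast+
  have X12: "submodule (msum M X1 X2) M" and Y12: "submodule (msum M Y1 Y2) M"
    using msum_submodule X1 X2 Y1 Y2 by blast+
  have comm12: "msum M (msum M Y1 Y2) (msum M X1 X2) = msum M (msum M X1 X2) (msum M Y1 Y2)"
    using msum_comm X12 Y12 sub_carrier by metis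
  show ?thesis
    unfolding beta_star_iff_cosmall[OF X12 Y12]
    using cosmall_msum[OF X1 Y1 X2 Y2 c1(1) c2(1)] cosmall_msum[OF Y1 X1 Y2 X2 c1(2) c2(2)]
    unfolding comm12 by blast
qed

lemma beta_star_zero: "beta_star M {mzero M} {mzero M}"
proof -
  have "msum M {mzero M} {mzero M} = {mzero M}"
    using msum_absorb[OF zero_submodule zero_submodule] by blast
  moreover have "cosmall {mzero M} {mzero M}" unfolding cosmall_def by blast
  ultimately show ?thesis
    unfolding beta_star_iff_cosmall[OF zero_submodule zero_submodule] by (simp only:)
qed

lemma zero_direct_summand: "direct_summand {mzero M} M"
proof -
  have full: "submodule (carrier M) M" unfolding submodule_def by simp
  have "msum M {mzero M} (carrier M) = carrier M"
    using msum_absorb[OF zero_submodule full] by simp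
  then show ?thesis
    unfolding direct_summand_def using zero_submodule full by auto
qed

definition has_summand_partner :: "'m set \<Rightarrow> bool" where
  "has_summand_partner X \<longleftrightarrow> (\<exists>D. direct_summand D M \<and> beta_star M X D)"

lemma has_summand_partner_zero: "has_summand_partner {mzero M}"
  unfolding has_summand_partner_def using zero_direct_summand beta_star_zero by blast

lemma has_summand_partner_msum:
  assumes ssp: "summand_sum_property M"
    and Y: "submodule Y M" and Z: "submodule Z M"
    and pY: "has_summand_partner Y" and pZ: "has_summand_partner Z"
  shows "has_summand_partner (msum M Y Z)"
proof -
  obtain D1 where D1: "direct_summand D1 M" "beta_star M Y D1"
    using pY unfolding has_summand_partner_def by blast
  obtain D2 where D2: "direct_summand D2 M" "beta_star M Z D2"
    using pZ unfolding has_summand_partner_def by blast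
  have "submodule D1 M" "submodule D2 M"
    using D1(1) D2(1) unfolding direct_summand_def by blast+
  then have "beta_star M (msum M Y Z) (msum M D1 D2)"
    using beta_star_msum[OF Y _ Z _ D1(2) D2(2)] by blast
  moreover have "direct_summand (msum M D1 D2) M"
    using ssp D1(1) D2(1) unfolding summand_sum_property_def by blast
  ultimately show ?thesis unfolding has_summand_partner_def by blast
qed

subsection \<open>Induction over a Noetherian module\<close>

text \<open>The
  proof builds the ascending chain 0 \<subseteq> m1 R \<subseteq> m1 R + m2 R \<subseteq> ..., picking each
  new generator outside the previous term, until it stabilises at X.\<close>
lemma noetherian_cyclic_induction:
  assumes noeth: "noetherian M" and X: "submodule X M"
    and base: "P {mzero M}"
    and step: "\<And>Y m. submodule Y M \<Longrightarrow> Y \<subseteq> X \<Longrightarrow> P Y \<Longrightarrow> m \<in> X \<Longrightarrow>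
                  P (msum M Y (cyclic_sub M m))"
  shows "P X"
proof -
  define Q where "Q Y \<longleftrightarrow> submodule Y M \<and> Y \<subseteq> X \<and> P Y" for Y
  define grow where "grow Y =
    (if Y = X then Y else msum M Y (cyclic_sub M (SOME m. m \<in> X \<and> m \<notin> Y)))" for Y
  have grow: "Q (grow Y) \<and> Y \<subseteq> grow Y \<and> (grow Y = Y \<longrightarrow> Y = X)" if QY: "Q Y" for Y
  proof (cases "Y = X")
    case True
    then show ?thesis using QY by (simp add: grow_def)
  next
    case False
    have Y: "submodule Y M" "Y \<subseteq> X" "P Y" using QY unfolding Q_def by auto
    define m where "m = (SOME m. m \<in> X \<and> m \<notin> Y)"
    have "\<exists>m. m \<in> X \<and> m \<notin> Y" using False Y(2) by blast
    then have m: "m \<in> X \<and> m \<notin> Y" unfolding m_def by (rule someI_ex)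
    have mc: "m \<in> carrier M" using m X sub_carrier by blast
    have mR: "submodule (cyclic_sub M m) M" using cyclic_submodule[OF mc] .
    have grow_Y: "grow Y = msum M Y (cyclic_sub M m)"
      using False unfolding grow_def m_def by simp
    have "Q (grow Y)" unfolding Q_def grow_Y
      using msum_submodule[OF Y(1) mR] msum_least[OF X Y(2) cyclic_least[OF X]]
        step[OF Y] m by blast
    moreover have "Y \<subseteq> grow Y"
      unfolding grow_Y using msum_upper1[OF mR sub_carrier[OF Y(1)]] .
    moreover have "m \<in> grow Y"
      unfolding grow_Y using msum_upper2[OF Y(1) sub_carrier[OF mR]] cyclic_mem[OF mc] by blast
    then have "grow Y \<noteq> Y" using m by auto
    ultimately show ?thesis by blast
  qed
  define f where "f n = (grow ^^ n) {mzero M}" for n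
  have f_Suc: "f (Suc n) = grow (f n)" for n unfolding f_def by simp
  have Qf: "Q (f n)" for n
  proof (induction n)
    case 0
    then show ?case
      unfolding f_def Q_def using zero_submodule sub_zero[OF X] base by simp
  next
    case (Suc n)
    then show ?case unfolding f_Suc using grow[OF Suc.IH] by blast
  qed
  have "\<forall>n. submodule (f n) M" using Qf unfolding Q_def by blast
  moreover have "\<forall>n. f n \<subseteq> f (Suc n)"
    unfolding f_Suc using grow[OF Qf] by blast
  ultimately obtain N where "\<forall>n\<ge>N. f n = f N"
    using noeth[unfolded noetherian_def, rule_format, of f] by blast
  then have "f (Suc N) = f N" using le_SucI[OF order_refl] by blast
  then have "grow (f N) = f N" unfolding f_Suc .
  then have "f N = X" using grow[OF Qf[of N]] by blast
  then show "P X" using Qf unfolding Q_def by blast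
qed

end

theorem proposition3p18:
  fixes M :: "('r::ring_1, 'm) rmod"
  assumes "rmodule M" and "noetherian M" and "summand_sum_property M"
  shows "principally_goldie_star_lifting M \<longleftrightarrow> goldie_star_lifting M"
proof -
  interpret right_module M by unfold_locales (rule assms(1))
  have cyclic: "has_summand_partner (cyclic_sub M m)"
    if "principally_goldie_star_lifting M" "m \<in> carrier M" for m
    using that unfolding principally_goldie_star_lifting_def has_summand_partner_def by blast
  have "goldie_star_lifting M" if pgl: "principally_goldie_star_lifting M"
    unfolding goldie_star_lifting_def has_summand_partner_def [symmetric]
  proof (intro allI impI)
    fix X assume X: "submodule X M"
    show "has_summand_partner X"
    proof (rule noetherian_cyclic_induction [where P = has_summand_partner, OF assms(2) X
        has_summand_partner_zero])
      fix Y m assume Y: "submodule Y M" and pY: "has_summand_partner Y" and "m \<in> X"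
      then have m: "m \<in> carrier M" using X sub_carrier by blast
      show "has_summand_partner (msum M Y (cyclic_sub M m))"
        using has_summand_partner_msum [OF assms(3) Y cyclic_submodule [OF m] pY
            cyclic [OF pgl m]] .
    qed
  qed
  moreover have "principally_goldie_star_lifting M" if "goldie_star_lifting M"
    using that cyclic_submodule
    unfolding goldie_star_lifting_def principally_goldie_star_lifting_def by blast
  ultimately show ?thesis by blast
qed

end
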